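(* For every even $n\ge0$ and every graph $G$ of order $n$, the number of faces satisfies $F(G)\le \frac{3n}{2}+1$.
   Context: Trees. A 2-rooted ternary tree of order $n$ is a finite plane tree $U$ with a root vertex of degree 2 and $n$ true vertices of degree 4; each edge is internal or a leaf (half-edge). Each true vertex $v$ has parent edge $e_1(v)$ (towards the root) and ordered children edges $e_2(v),e_3(v),e_4(v)$. One root edge has type $\alpha$, the other $\bar\alpha$; if $e_1(v)$ has type $\tau$ then $e_2(v)$ has the other type and $e_3(v),e_4(v)$ have type $\tau$. Leaves of type $\alpha$ are leaves, of type $\bar\alpha$ anti-leaves ($n+1$ each). A heap-ordering labels true vertices bijectively by $\{1,\dots,n\}$, increasing from parent to child. Graphs. For even $n$, a graph of order $n$ is $G=(U,w,w')$: $U$ heap-ordered; $w$ a bijection leaves $\to$ anti-leaves (dashed edges; internal edges are solid); $w'$ a partition of true vertices into $n/2$ pairs (wavy edges) with, for each pair $\{v,v'\}$ ($v$ of smaller label), one of eight propagators in $(S,j,k)=(S_v,j_v,k_v)$, $(S',j',k')=(S_{v'},j_{v'},k_{v'})$: $\delta_{jj'}\delta_{kk'}$, $\delta_{j,S-j'}\delta_{kk'}$, $\delta_{jj'}\delta_{k,S-k'}$, $\delta_{j,S-j'}\delta_{k,S-k'}$, $\delta_{jk'}\delta_{kj'}$, $\delta_{j,S-k'}\delta_{kj'}$, $\delta_{jk'}\delta_{k,S-j'}$, $\delta_{j,S-k'}\delta_{k,S-j'}$, together with $S=S'$. Momenta $j_v,S_v-j_v,k_v,S_v-k_v$ are attached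 to the ends at $v$ of $e_1(v),\dots,e_4(v)$. Faces. Call the edge-ends at true vertices and at the root slots. Each propagator of a wavy edge $\{v,v'\}$, with $S=S'$, identifies each of $j,S-j,k,S-k$ of $v$ with one momentum of $v'$, hence pairs each slot of $v$ with a slot of $v'$; these four pairs are the corners of that wavy edge ($2n$ corners). Let $\Gamma$ be the graph on the slots whose edges are the solid and dashed edges of $G$, the corners, and one extra edge joining the two root slots; every slot has degree 2 and the connected components (cycles) of $\Gamma$ are the faces; $F(G)$ is their number. *)

theory Defs
  imports Complex_Main
begin

text \<open>Slots (edge-ends): RS 0, RS 1 are the two slots at the root (RS 0 is the
first root edge, RS 1 the second); VS v i (1 <= i <= 4) is the end of e_i(v) at the
true vertex v.  True vertices are identified with their heap labels 1..n.\<close>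

datatype slot = RS nat | VS nat nat

definition all_slots :: "nat \<Rightarrow> slot set" where
  "all_slots n = {RS 0, RS 1} \<union> {VS v i | v i. v \<in> {1..n} \<and> i \<in> {1..4}}"

text \<open>Down slots: slots from which an edge goes away from the root (root slots and
the children slots e_2, e_3, e_4 of true vertices).\<close>
definition down_slots :: "nat \<Rightarrow> slot set" where
  "down_slots n = {RS 0, RS 1} \<union> {VS v i | v i. v \<in> {1..n} \<and> i \<in> {2,3,4}}"

text \<open>A tree is given by ch: for a down slot s, ch s = Some v if the edge at s is
internal and ends at the true vertex v (at v's slot VS v 1), and ch s = None if the
edge at s is a leaf/anti-leaf (half-edge).\<close>
definition heap_tree :: "nat \<Rightarrow> (slot \<Rightarrow> nat option) \<Rightarrow> bool" where
  "heap_tree n ch \<longleftrightarrow>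
     (\<forall>s. s \<notin> down_slots n \<longrightarrow> ch s = None) \<and>
     bij_betw ch {s \<in> down_slots n. ch s \<noteq> None} (Some ` {1..n}) \<and>
     (\<forall>u i v. ch (VS u i) = Some v \<longrightarrow> u < v)"

text \<open>Edge types: etype rt ch s b means the edge at down slot s has type b, where
True stands for alpha and False for alpha-bar.  rt is the type of the root edge at
RS 0; the root edge at RS 1 has the other type.\<close>
inductive etype :: "bool \<Rightarrow> (slot \<Rightarrow> nat option) \<Rightarrow> slot \<Rightarrow> bool \<Rightarrow> bool"
  for rt :: bool and ch :: "slot \<Rightarrow> nat option" where
  root0: "etype rt ch (RS 0) rt"
| root1: "etype rt ch (RS 1) (\<not> rt)"
| child2: "ch s = Some u \<Longrightarrow> etype rt ch s b \<Longrightarrow> etype rt ch (VS u 2) (\<not> b)"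
| child34: "ch s = Some u \<Longrightarrow> etype rt ch s b \<Longrightarrow> i \<in> {3, 4} \<Longrightarrow> etype rt ch (VS u i) b"

definition leaves :: "nat \<Rightarrow> bool \<Rightarrow> (slot \<Rightarrow> nat option) \<Rightarrow> slot set" where
  "leaves n rt ch = {s \<in> down_slots n. ch s = None \<and> etype rt ch s True}"

definition antileaves :: "nat \<Rightarrow> bool \<Rightarrow> (slot \<Rightarrow> nat option) \<Rightarrow> slot set" where
  "antileaves n rt ch = {s \<in> down_slots n. ch s = None \<and> etype rt ch s False}"

text \<open>Momenta at the slots of a vertex: slot 1 carries j, slot 2 carries S-j,
slot 3 carries k, slot 4 carries S-k.  A momentum is encoded as (flip, var) with
var = False for j, True for k, and flip = True for "S - .".\<close>
definition mom :: "nat \<Rightarrow> bool \<times> bool" where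
  "mom i = (if i = 1 then (False, False) else if i = 2 then (True, False)
            else if i = 3 then (False, True) else (True, True))"

definition slot_of_mom :: "bool \<times> bool \<Rightarrow> nat" where
  "slot_of_mom m = (if snd m then 3 else 1) + (if fst m then 1 else 0)"

text \<open>A propagator (sw, fj, fk) means: j = (S - if fj) (if sw then k' else j') and
k = (S - if fk) (if sw then j' else k'), together with S = S'.  The 8 triples are
exactly the 8 propagators of the paper:
(F,F,F) d_{jj'}d_{kk'}, (F,T,F) d_{j,S-j'}d_{kk'}, (F,F,T) d_{jj'}d_{k,S-k'},
(F,T,T) d_{j,S-j'}d_{k,S-k'}, (T,F,F) d_{jk'}d_{kj'}, (T,T,F) d_{j,S-k'}d_{kj'},
(T,F,T) d_{jk'}d_{k,S-j'}, (T,T,T) d_{j,S-k'}d_{k,S-j'}.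
corner_slot pr i is the slot of v' identified with slot i of v.\<close>
definition corner_slot :: "bool \<times> bool \<times> bool \<Rightarrow> nat \<Rightarrow> nat" where
  "corner_slot pr i =
     (let (sw, fj, fk) = pr; (fl, x) = mom i;
          f = (if x then fk else fj)
      in slot_of_mom (fl \<noteq> f, x \<noteq> sw))"

text \<open>A graph of order n: heap-ordered tree (n, rt, ch); w a bijection from leaves to
anti-leaves (dashed edges); p a fixed-point-free involution on {1..n} (wavy edges:
the pairs {v, p v}); pr v is the propagator of the wavy edge {v, p v} when v < p v.\<close>
definition is_graph :: "nat \<Rightarrow> bool \<Rightarrow> (slot \<Rightarrow> nat option) \<Rightarrow> (slot \<Rightarrow> slot)
    \<Rightarrow> (nat \<Rightarrow> nat) \<Rightarrow> (nat \<Rightarrow> bool \<times> bool \<times> bool) \<Rightarrow> bool" where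
  "is_graph n rt ch w p pr \<longleftrightarrow>
     heap_tree n ch \<and>
     bij_betw w (leaves n rt ch) (antileaves n rt ch) \<and>
     (\<forall>v \<in> {1..n}. p v \<in> {1..n} \<and> p v \<noteq> v \<and> p (p v) = v)"

definition gamma_edges :: "nat \<Rightarrow> bool \<Rightarrow> (slot \<Rightarrow> nat option) \<Rightarrow> (slot \<Rightarrow> slot)
    \<Rightarrow> (nat \<Rightarrow> nat) \<Rightarrow> (nat \<Rightarrow> bool \<times> bool \<times> bool) \<Rightarrow> (slot \<times> slot) set" where
  "gamma_edges n rt ch w p pr =
     {(s, VS v 1) | s v. s \<in> down_slots n \<and> ch s = Some v}
     \<union> {(l, w l) | l. l \<in> leaves n rt ch}
     \<union> {(VS v i, VS (p v) (corner_slot (pr v) i)) | v i. v \<in> {1..n} \<and> v < p v \<and> i \<in> {1..4}}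
     \<union> {(RS 0, RS 1)}"

definition faces :: "nat \<Rightarrow> bool \<Rightarrow> (slot \<Rightarrow> nat option) \<Rightarrow> (slot \<Rightarrow> slot)
    \<Rightarrow> (nat \<Rightarrow> nat) \<Rightarrow> (nat \<Rightarrow> bool \<times> bool \<times> bool) \<Rightarrow> nat" where
  "faces n rt ch w p pr =
     card (all_slots n // ((gamma_edges n rt ch w p pr \<union> (gamma_edges n rt ch w p pr)\<inverse>)\<^sup>*))"

end

theory Submission
  imports Defs
begin

(* Add, for every wavy edge {v, v'} with v < v', three extra edges joining the slot
   e_1(v) to the other three slots of v.  The corners of the wavy edge match the four
   slots of v' with those of v, so now every slot is joined to the parent slot of its
   vertex, and following the tree edges towards the root (by induction along the heap
   order) every slot is joined to the root.  The augmented graph is connected, and since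
   adding one edge merges at most two components, F(G) <= 1 + 3 (n/2). *)

definition conn_rel :: "('a \<times> 'a) set \<Rightarrow> ('a \<times> 'a) set" where
  "conn_rel E = (E \<union> E\<inverse>)\<^sup>*"

lemma conn_rel_edge: "(x, y) \<in> E \<Longrightarrow> (x, y) \<in> conn_rel E"
  unfolding conn_rel_def by auto

lemma conn_rel_refl: "(x, x) \<in> conn_rel E"
  unfolding conn_rel_def by simp

lemma conn_rel_sym: "(x, y) \<in> conn_rel E \<Longrightarrow> (y, x) \<in> conn_rel E"
  unfolding conn_rel_def by (metis sym_Un_converse sym_rtrancl symD)

lemma conn_rel_trans [trans]: "(x, y) \<in> conn_rel E \<Longrightarrow> (y, z) \<in> conn_rel E \<Longrightarrow> (x, z) \<in> conn_rel E"
  unfolding conn_rel_def by (rule rtrancl_trans)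

lemma equiv_conn_rel: "equiv UNIV (conn_rel E)"
  by (rule equivI) (auto intro: refl_onI symI transI conn_rel_refl conn_rel_sym conn_rel_trans)

lemma conn_rel_class_eq_iff: "conn_rel E `` {x} = conn_rel E `` {y} \<longleftrightarrow> (x, y) \<in> conn_rel E"
  by (rule eq_equiv_class_iff[OF equiv_conn_rel UNIV_I UNIV_I])

lemma conn_rel_insert:
  "(x, y) \<in> conn_rel (insert (a, b) E) \<longleftrightarrow>
     (x, y) \<in> conn_rel E \<or> (x, a) \<in> conn_rel E \<and> (b, y) \<in> conn_rel E
       \<or> (x, b) \<in> conn_rel E \<and> (a, y) \<in> conn_rel E"
proof -
  have "conn_rel (insert (a, b) E) = (insert (a, b) (insert (b, a) (E \<union> E\<inverse>)))\<^sup>*"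
    unfolding conn_rel_def by (rule arg_cong[where f = rtrancl]) auto
  then show ?thesis
    unfolding rtrancl_insert conn_rel_def[symmetric]
    by (auto intro: conn_rel_sym conn_rel_trans)
qed

lemma finite_quotient_of_finite: "finite S \<Longrightarrow> finite (S // R)"
  by (simp add: quotient_def)

lemma card_quotient_conn_rel_insert:
  assumes "finite S"
  shows "card (S // conn_rel E) \<le> card (S // conn_rel (insert (a, b) E)) + 1"
proof -
  let ?R = "conn_rel E" and ?R' = "conn_rel (insert (a, b) E)"
  define f where "f C = ?R' `` C" for C
  have R_sub: "(x, y) \<in> ?R'" if "(x, y) \<in> ?R" for x y
    using that by (simp add: conn_rel_insert)
  have f_class: "f (?R `` {x}) = ?R' `` {x}" for x
  proof
    show "f (?R `` {x}) \<subseteq> ?R' `` {x}"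
    proof
      fix z assume "z \<in> f (?R `` {x})"
      then obtain y where "(x, y) \<in> ?R" "(y, z) \<in> ?R'"
        by (auto simp: f_def)
      then show "z \<in> ?R' `` {x}"
        using conn_rel_trans[OF R_sub] by simp
    qed
  qed (auto simp: f_def intro: conn_rel_refl)
  have f_into: "f ` (S // ?R) \<subseteq> S // ?R'"
    by (auto elim!: quotientE simp: f_class quotientI)
  have "inj_on f (S // ?R - {?R `` {a}})"
  proof (rule inj_onI)
    fix C D assume C: "C \<in> S // ?R - {?R `` {a}}" and D: "D \<in> S // ?R - {?R `` {a}}"
      and "f C = f D"
    obtain x y where x: "C = ?R `` {x}" and y: "D = ?R `` {y}"
      using C D by (auto elim!: quotientE)
    have "(x, a) \<notin> ?R" "(y, a) \<notin> ?R"
      using C D unfolding x y by (simp_all add: conn_rel_class_eq_iff)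
    moreover have "(x, y) \<in> ?R'"
      using \<open>f C = f D\<close> x y by (simp add: f_class conn_rel_class_eq_iff)
    ultimately have "(x, y) \<in> ?R"
      by (metis conn_rel_insert conn_rel_sym)
    then show "C = D"
      unfolding x y conn_rel_class_eq_iff .
  qed
  have "card (S // ?R) \<le> card (S // ?R - {?R `` {a}}) + 1"
    using finite_quotient_of_finite[OF assms]
    by (cases "?R `` {a} \<in> S // ?R") (simp_all add: card_Diff_singleton_if)
  also have "card (S // ?R - {?R `` {a}}) = card (f ` (S // ?R - {?R `` {a}}))"
    using \<open>inj_on f _\<close> by (simp add: card_image)
  also have "\<dots> \<le> card (S // ?R')"
    using f_into finite_quotient_of_finite[OF assms] by (intro card_mono) auto
  finally show ?thesis by simp
qed

lemma card_quotient_conn_rel_Un: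
  assumes "finite S" and "finite X"
  shows "card (S // conn_rel E) \<le> card (S // conn_rel (X \<union> E)) + card X"
  using assms(2)
proof (induction X rule: finite_induct)
  case empty
  then show ?case by simp
next
  case (insert e X)
  obtain a b where "e = (a, b)" by fastforce
  then show ?case
    using insert card_quotient_conn_rel_insert[OF assms(1), of "X \<union> E" a b] by simp
qed

lemma card_quotient_conn_rel_le_1:
  assumes "\<forall>x \<in> S. (x, c) \<in> conn_rel E"
  shows "card (S // conn_rel E) \<le> 1"
proof -
  have "conn_rel E `` {x} = conn_rel E `` {c}" if "x \<in> S" for x
    using assms that by (simp add: conn_rel_class_eq_iff)
  then have "S // conn_rel E \<subseteq> {conn_rel E `` {c}}"
    by (auto elim!: quotientE)
  then show ?thesis
    using card_mono[of "{conn_rel E `` {c}}"] by simp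
qed

lemma card_eq_twice_card_less_partner:
  fixes p :: "'a::linorder \<Rightarrow> 'a"
  assumes "finite V" and p: "\<forall>v \<in> V. p v \<in> V \<and> p v \<noteq> v \<and> p (p v) = v"
  shows "card V = 2 * card {v \<in> V. v < p v}"
proof -
  let ?A = "{v \<in> V. v < p v}"
  have "v \<in> ?A \<union> p ` ?A" if "v \<in> V" for v
  proof (cases "v < p v")
    case False
    with p that have "p v \<in> ?A" "v = p (p v)"
      by (auto simp: neq_iff)
    then show ?thesis
      by blast
  qed (use that in simp)
  then have cover: "?A \<union> p ` ?A = V"
    using p by auto
  have disjoint: "?A \<inter> p ` ?A = {}"
  proof -
    have False if "v \<in> ?A" "p v \<in> ?A" for v
      using that p by force
    then show ?thesis
      by blast
  qed
  have "inj_on p ?A"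
    using p by (intro inj_on_inverseI[where g = p]) auto
  have "card V = card (?A \<union> p ` ?A)"
    using cover by simp
  also have "\<dots> = card ?A + card (p ` ?A)"
    using assms(1) disjoint by (intro card_Un_disjoint) auto
  also have "card (p ` ?A) = card ?A"
    using \<open>inj_on p ?A\<close> by (rule card_image)
  finally show ?thesis
    by simp
qed

lemma corner_slot_surj:
  assumes "i \<in> {1..4}"
  shows "\<exists>j \<in> {1..4}. corner_slot pr j = i"
proof -
  have "{1..4::nat} = {1, 2, 3, 4}" by auto
  then show ?thesis
    using assms by (cases pr) (auto simp: corner_slot_def mom_def slot_of_mom_def)
qed

lemma finite_all_slots: "finite (all_slots n)"
proof -
  have "all_slots n \<subseteq> {RS 0, RS 1} \<union> (\<lambda>(v, i). VS v i) ` ({1..n} \<times> {1..4})"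
    unfolding all_slots_def by auto
  then show ?thesis
    by (rule finite_subset) auto
qed

locale graph =
  fixes n rt ch w p pr
  assumes is_graph: "is_graph n rt ch w p pr"
begin

lemma heap_tree: "heap_tree n ch"
  and pairing: "\<forall>v \<in> {1..n}. p v \<in> {1..n} \<and> p v \<noteq> v \<and> p (p v) = v"
  using is_graph unfolding is_graph_def by auto

definition pair_reps :: "nat set" where
  "pair_reps = {v \<in> {1..n}. v < p v}"

definition spokes :: "(slot \<times> slot) set" where
  "spokes = (\<lambda>(v, i). (VS v 1, VS v i)) ` (pair_reps \<times> {2, 3, 4})"

abbreviation augmented_conn :: "(slot \<times> slot) set" where
  "augmented_conn \<equiv> conn_rel (spokes \<union> gamma_edges n rt ch w p pr)"

lemma gamma_edge_augmented:
  "(x, y) \<in> gamma_edges n rt ch w p pr \<Longrightarrow> (x, y) \<in> augmented_conn"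
  by (rule conn_rel_edge) simp

lemma root_slots_conn: "(RS 1, RS 0) \<in> augmented_conn"
  by (rule conn_rel_sym, rule gamma_edge_augmented) (simp add: gamma_edges_def)

lemma twice_card_pair_reps: "n = 2 * card pair_reps"
  using card_eq_twice_card_less_partner[OF _ pairing] by (simp add: pair_reps_def)

lemma card_spokes: "finite spokes" "card spokes \<le> 3 * card pair_reps"
proof -
  have "finite pair_reps"
    by (simp add: pair_reps_def)
  then show "finite spokes"
    by (simp add: spokes_def)
  have "card spokes \<le> card (pair_reps \<times> {2, 3, 4::nat})"
    unfolding spokes_def using \<open>finite pair_reps\<close> by (intro card_image_le finite_SigmaI) auto
  also have "\<dots> = 3 * card pair_reps"
    by (simp add: card_cartesian_product)
  finally show "card spokes \<le> 3 * card pair_reps" .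
qed

lemma pair_rep_slot_conn:
  assumes "u \<in> pair_reps" and "j \<in> {1..4}"
  shows "(VS u j, VS u 1) \<in> augmented_conn"
proof (cases "j = 1")
  case False
  with assms have "(u, j) \<in> pair_reps \<times> {2, 3, 4}"
    by auto
  then have "(VS u 1, VS u j) \<in> spokes \<union> gamma_edges n rt ch w p pr"
    unfolding spokes_def by (intro UnI1 image_eqI[where x = "(u, j)"]) auto
  then show ?thesis
    by (rule conn_rel_sym[OF conn_rel_edge])
qed (simp add: conn_rel_refl)

lemma vertex_slot_conn:
  assumes v: "v \<in> {1..n}" and i: "i \<in> {1..4}"
  shows "(VS v i, VS v 1) \<in> augmented_conn"
proof (cases "v < p v")
  case True
  with assms show ?thesis
    by (intro pair_rep_slot_conn) (auto simp: pair_reps_def)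
next
  case False
  define u where "u = p v"
  have "u \<in> {1..n}" "u \<noteq> v" "p u = v"
    using pairing v unfolding u_def by auto
  with False have u: "u \<in> pair_reps" "p u = v"
    unfolding u_def pair_reps_def by auto
  obtain j where j: "j \<in> {1..4}" "corner_slot (pr u) j = i"
    using corner_slot_surj[OF i] by blast
  obtain j1 where j1: "j1 \<in> {1..4}" "corner_slot (pr u) j1 = 1"
    using corner_slot_surj[of 1 "pr u"] by auto
  have corner: "(VS u k, VS v (corner_slot (pr u) k)) \<in> augmented_conn" if "k \<in> {1..4}" for k
    using u that by (intro gamma_edge_augmented) (auto simp: pair_reps_def gamma_edges_def)
  have "(VS v i, VS u j) \<in> augmented_conn"
    using corner[OF j(1)] j(2) u(2) by (simp add: conn_rel_sym)
  also have "(VS u j, VS u 1) \<in> augmented_conn"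
    using u(1) j(1) by (rule pair_rep_slot_conn)
  also have "(VS u 1, VS u j1) \<in> augmented_conn"
    using pair_rep_slot_conn[OF u(1) j1(1)] by (rule conn_rel_sym)
  also have "(VS u j1, VS v 1) \<in> augmented_conn"
    using corner[OF j1(1)] j1(2) by simp
  finally show ?thesis .
qed

lemma parent_slot:
  assumes "v \<in> {1..n}"
  obtains s where "s \<in> down_slots n" "ch s = Some v"
proof -
  have "Some v \<in> ch ` {s \<in> down_slots n. ch s \<noteq> None}"
    using heap_tree assms unfolding heap_tree_def bij_betw_def by auto
  then show ?thesis
    using that by auto
qed

lemma first_slot_conn_root: "v \<in> {1..n} \<Longrightarrow> (VS v 1, RS 0) \<in> augmented_conn"
proof (induction v rule: less_induct)
  case (less v)
  obtain s where s: "s \<in> down_slots n" "ch s = Some v"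
    using parent_slot[OF less.prems] .
  have tree_edge: "(s, VS v 1) \<in> augmented_conn"
    using s by (intro gamma_edge_augmented) (auto simp: gamma_edges_def)
  have "(s, RS 0) \<in> augmented_conn"
  proof -
    consider "s = RS 0" | "s = RS 1" | u i where "s = VS u i" "u \<in> {1..n}" "i \<in> {2, 3, 4}"
      using s(1) unfolding down_slots_def by auto
    then show ?thesis
    proof cases
      case 2
      then show ?thesis
        using root_slots_conn by simp
    next
      case (3 u i)
      with s(2) heap_tree have "u < v"
        unfolding heap_tree_def by blast
      have "(VS u i, VS u 1) \<in> augmented_conn"
        using 3 by (intro vertex_slot_conn) auto
      also have "(VS u 1, RS 0) \<in> augmented_conn"
        using \<open>u < v\<close> 3(2) by (rule less.IH)
      finally show ?thesis
        using 3(1) by simp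
    qed (simp add: conn_rel_refl)
  qed
  with conn_rel_sym[OF tree_edge] show ?case
    by (rule conn_rel_trans)
qed

lemma slot_conn_root:
  assumes "x \<in> all_slots n"
  shows "(x, RS 0) \<in> augmented_conn"
proof -
  consider "x = RS 0" | "x = RS 1" | v i where "x = VS v i" "v \<in> {1..n}" "i \<in> {1..4}"
    using assms unfolding all_slots_def by auto
  then show ?thesis
  proof cases
    case 2
    then show ?thesis
      using root_slots_conn by simp
  next
    case (3 v i)
    then show ?thesis
      using conn_rel_trans[OF vertex_slot_conn first_slot_conn_root] by simp
  qed (simp add: conn_rel_refl)
qed

lemma faces_le: "faces n rt ch w p pr \<le> 1 + 3 * card pair_reps"
proof -
  have "faces n rt ch w p pr = card (all_slots n // conn_rel (gamma_edges n rt ch w p pr))"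
    by (simp add: faces_def conn_rel_def)
  also have "\<dots> \<le> card (all_slots n // augmented_conn) + card spokes"
    by (rule card_quotient_conn_rel_Un[OF finite_all_slots card_spokes(1)])
  also have "card (all_slots n // augmented_conn) \<le> 1"
    using slot_conn_root by (intro card_quotient_conn_rel_le_1) blast
  finally show ?thesis
    using card_spokes(2) by simp
qed

end

theorem lemma2:
  fixes n :: nat and rt :: bool and ch :: "slot \<Rightarrow> nat option" and w :: "slot \<Rightarrow> slot"
    and p :: "nat \<Rightarrow> nat" and pr :: "nat \<Rightarrow> bool \<times> bool \<times> bool"
  assumes "even n"
    and "is_graph n rt ch w p pr"
  shows "real (faces n rt ch w p pr) \<le> 3 * real n / 2 + 1"
proof -
  interpret graph n rt ch w p pr
    using assms(2) by unfold_locales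
  have "2 * faces n rt ch w p pr \<le> 2 + 3 * n"
    using faces_le twice_card_pair_reps by simp
  then show ?thesis
    by linarith
qed

end
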